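(* Let $\Gamma$ be a free group with a finite or countably infinite free basis $S$. Let $T$ be the Cayley graph of $\Gamma$ with respect to $S\cup S^{-1}$, which is a tree. Let $\mu$ be a probability measure on $S\cup S^{-1}$ with $\mu(s)>0$ for all $s\in S\cup S^{-1}$, and let $P$ be the nearest neighbour random walk with $p(x,y)=\mu(x^{-1}y)$. Then $G(x,x\mid\lambda)\ne0$ for every $x\in T$ and every $\lambda\in\mathrm{res}(P)$. Consequently $\mathrm{res}^*(P)=\mathrm{res}(P)$.
   Context: Fix the root $o=e$, the identity element. Define $\mathsf m(x)=\prod_{i=1}^k p(x_{i-1},x_i)/p(x_i,x_{i-1})$ along the geodesic $[o=x_0,\dots,x_k=x]$. Then $P$, acting by $Pf(x)=\sum_y p(x,y)f(y)$, is a bounded self-adjoint operator on $\ell^2(T,\mathsf m)$. $\mathrm{res}(P)=\mathbb{C}\setminus\mathrm{spec}(P)$. For $\lambda\in\mathrm{res}(P)$, $G(x,y\mid\lambda)=((\lambda I-P)^{-1}\mathbf 1_y)(x)$; for $|\lambda|>\rho$ this equals $\sum_n p^{(n)}(x,y)\lambda^{-n-1}$, where $\rho$ is the spectral radius. $\mathrm{res}^*(P)=\{\lambda\in\mathrm{res}(P):G(x,x\mid\lambda)\ne0\text{ for all }x\}$. *)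

theory Defs
  imports "HOL-Analysis.Analysis"
begin

text \<open>Free group on a basis S (elements of type 'a). A letter is (s, True) for s
  and (s, False) for s^-1. Group elements are reduced words over letters from S.\<close>

type_synonym 'a letter = "'a \<times> bool"
type_synonym 'a word = "'a letter list"

definition flip :: "'a letter \<Rightarrow> 'a letter" where
  "flip t = (fst t, \<not> snd t)"

definition letters :: "'a set \<Rightarrow> 'a letter set" where
  "letters S = S \<times> (UNIV :: bool set)"

definition reduced :: "'a word \<Rightarrow> bool" where
  "reduced w \<longleftrightarrow> (\<forall>i. Suc i < length w \<longrightarrow> w ! Suc i \<noteq> flip (w ! i))"

definition fg_verts :: "'a set \<Rightarrow> 'a word set" where
  "fg_verts S = {w. set w \<subseteq> letters S \<and> reduced w}"

definition step :: "'a word \<Rightarrow> 'a letter \<Rightarrow> 'a word" where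
  "step w t = (if w \<noteq> [] \<and> last w = flip t then butlast w else w @ [t])"

definition fg_mult :: "'a word \<Rightarrow> 'a word \<Rightarrow> 'a word" where
  "fg_mult u v = foldl step u v"

definition fg_inv :: "'a word \<Rightarrow> 'a word" where
  "fg_inv w = rev (map flip w)"

definition trans_p :: "('a letter \<Rightarrow> real) \<Rightarrow> 'a word \<Rightarrow> 'a word \<Rightarrow> real" where
  "trans_p mu x y = (case fg_mult (fg_inv x) y of [t] \<Rightarrow> mu t | _ \<Rightarrow> 0)"

text \<open>The reversibility measure m(x) = prod p(x_{i-1},x_i)/p(x_i,x_{i-1}) along the
  geodesic from the root o = e (empty word) to x; the geodesic consists of the prefixes of x.\<close>
definition rev_meas :: "('a letter \<Rightarrow> real) \<Rightarrow> 'a word \<Rightarrow> real" where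
  "rev_meas mu x = (\<Prod>i\<in>{1..length x}.
      trans_p mu (take (i - 1) x) (take i x) / trans_p mu (take i x) (take (i - 1) x))"

definition l2m :: "'a set \<Rightarrow> ('a letter \<Rightarrow> real) \<Rightarrow> ('a word \<Rightarrow> complex) set" where
  "l2m S mu = {f. (\<forall>x. x \<notin> fg_verts S \<longrightarrow> f x = 0) \<and>
      (\<lambda>x. rev_meas mu x * (cmod (f x))\<^sup>2) summable_on fg_verts S}"

definition l2norm :: "'a set \<Rightarrow> ('a letter \<Rightarrow> real) \<Rightarrow> ('a word \<Rightarrow> complex) \<Rightarrow> real" where
  "l2norm S mu f = sqrt (\<Sum>\<^sub>\<infinity>x\<in>fg_verts S. rev_meas mu x * (cmod (f x))\<^sup>2)"

definition transP :: "'a set \<Rightarrow> ('a letter \<Rightarrow> real) \<Rightarrow> ('a word \<Rightarrow> complex) \<Rightarrow> 'a word \<Rightarrow> complex" where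
  "transP S mu f x = (if x \<in> fg_verts S
      then (\<Sum>\<^sub>\<infinity>y\<in>fg_verts S. complex_of_real (trans_p mu x y) * f y) else 0)"

definition shiftP :: "'a set \<Rightarrow> ('a letter \<Rightarrow> real) \<Rightarrow> complex \<Rightarrow> ('a word \<Rightarrow> complex) \<Rightarrow> 'a word \<Rightarrow> complex" where
  "shiftP S mu lam f x = lam * f x - transP S mu f x"

definition bounded_op_l2 :: "'a set \<Rightarrow> ('a letter \<Rightarrow> real) \<Rightarrow>
    (('a word \<Rightarrow> complex) \<Rightarrow> 'a word \<Rightarrow> complex) \<Rightarrow> bool" where
  "bounded_op_l2 S mu R \<longleftrightarrow>
     (\<forall>f\<in>l2m S mu. R f \<in> l2m S mu) \<and>
     (\<forall>f\<in>l2m S mu. \<forall>g\<in>l2m S mu. \<forall>a b. R (\<lambda>x. a * f x + b * g x) = (\<lambda>x. a * R f x + b * R g x)) \<and>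
     (\<exists>C. \<forall>f\<in>l2m S mu. l2norm S mu (R f) \<le> C * l2norm S mu f)"

definition resP :: "'a set \<Rightarrow> ('a letter \<Rightarrow> real) \<Rightarrow> complex set" where
  "resP S mu = {lam. \<exists>R. bounded_op_l2 S mu R \<and>
      (\<forall>f\<in>l2m S mu. shiftP S mu lam (R f) = f \<and> R (shiftP S mu lam f) = f)}"

definition greenG :: "'a set \<Rightarrow> ('a letter \<Rightarrow> real) \<Rightarrow> 'a word \<Rightarrow> 'a word \<Rightarrow> complex \<Rightarrow> complex" where
  "greenG S mu x y lam =
     (SOME g. g \<in> l2m S mu \<and> shiftP S mu lam g = (\<lambda>z. if z = y then 1 else 0)) x"

definition resP_star :: "'a set \<Rightarrow> ('a letter \<Rightarrow> real) \<Rightarrow> complex set" where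
  "resP_star S mu = {lam \<in> resP S mu. \<forall>x\<in>fg_verts S. greenG S mu x x lam \<noteq> 0}"

end

theory Submission
  imports Defs
begin

text \<open>
  Suppose \<open>G(x,x|\<lambda>) = 0\<close>. Left translations are automorphisms of the walk, so \<open>G(e,e|\<lambda>) = 0\<close>.
  Then \<open>(PG(\<cdot>,e))(e) = \<lambda>G(e,e) - 1 = -1\<close>, so \<open>G(t,e) \<noteq> 0\<close> for some letter \<open>t\<close>. Since the
  tree splits at \<open>e\<close> into branches \<open>T\<^sub>s\<close> (reduced words starting with \<open>s\<close>) and \<open>G(\<cdot>,e)\<close> vanishes
  at \<open>e\<close>, the restriction of \<open>G(\<cdot>,e)\<close> to \<open>T\<^sub>t\<close> again solves \<open>(\<lambda>I - P)g = c\<delta>\<^sub>e\<close> with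
  \<open>c = -\<mu>(t)G(t,e) \<noteq> 0\<close>. By uniqueness it equals \<open>cG(\<cdot>,e)\<close>, so \<open>G(\<cdot>,e)\<close> vanishes outside
  \<open>T\<^sub>t\<close>, in particular \<open>G(t\<^sup>-\<^sup>1,e) = 0\<close>, i.e. \<open>G(e,t) = 0\<close> by translation. This contradicts
  the reversibility relation \<open>m(t)G(t,e) = m(e)G(e,t)\<close>, which comes from the self-adjointness of
  \<open>P\<close> on \<open>\<ell>\<^sup>2(T,m)\<close>.
\<close>

subsection \<open>Reduced words\<close>

lemma flip_flip [simp]: "flip (flip t) = t"
  by (simp add: flip_def)

lemma flip_neq_self [simp]: "flip t \<noteq> t"
  by (simp add: flip_def prod_eq_iff)

lemma flip_eq_iff: "flip a = b \<longleftrightarrow> a = flip b"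
  by (auto simp: flip_def prod_eq_iff)

lemma flip_in_letters: "t \<in> letters S \<Longrightarrow> flip t \<in> letters S"
  by (auto simp: letters_def flip_def)

lemma reduced_Nil [simp]: "reduced []"
  by (simp add: reduced_def)

lemma reduced_snoc: "reduced (w @ [t]) \<longleftrightarrow> reduced w \<and> (w \<noteq> [] \<longrightarrow> last w \<noteq> flip t)"
proof -
  have last_pair: "(w @ [t]) ! Suc i = t" "(w @ [t]) ! i = last w" if "Suc i = length w" for i
    using that by (simp_all add: nth_append) (metis last_conv_nth diff_Suc_1 list.size(3) nat.distinct(1))
  have "reduced (w @ [t]) \<Longrightarrow> reduced w"
    unfolding reduced_def
    by (metis Suc_lessD length_append_singleton less_SucI nth_append_left)
  moreover have "last w \<noteq> flip t" if "reduced (w @ [t])" "w \<noteq> []"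
    using that last_pair[of "length w - 1"] unfolding reduced_def
    by (metis Suc_pred' length_append_singleton length_greater_0_conv lessI flip_flip)
  moreover have "reduced (w @ [t])" if "reduced w" "w \<noteq> [] \<longrightarrow> last w \<noteq> flip t"
    unfolding reduced_def
  proof (intro allI impI)
    fix i assume i: "Suc i < length (w @ [t])"
    show "(w @ [t]) ! Suc i \<noteq> flip ((w @ [t]) ! i)"
    proof (cases "Suc i < length w")
      case True
      then show ?thesis using \<open>reduced w\<close> by (simp add: nth_append reduced_def)
    next
      case False
      then have "Suc i = length w" using i by simp
      then show ?thesis using that(2) last_pair by (metis flip_flip length_0_conv nat.distinct(1))
    qed
  qed
  ultimately show ?thesis by blast
qed

lemma reduced_butlast: "reduced w \<Longrightarrow> reduced (butlast w)"
  by (metis append_butlast_last_id butlast.simps(1) reduced_snoc)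

lemma reduced_Cons: "reduced (t # w) \<longleftrightarrow> reduced w \<and> (w \<noteq> [] \<longrightarrow> hd w \<noteq> flip t)"
  unfolding reduced_def
  apply (auto simp: nth_Cons split: nat.splits)
   apply (metis Suc_less_eq hd_conv_nth length_greater_0_conv nth_Cons_0 nth_Cons_Suc)
  by (metis One_nat_def hd_conv_nth less_Suc_eq_0_disj list.size(3) not_less_zero)

subsection \<open>Multiplication in the free group\<close>

lemma reduced_step: "reduced w \<Longrightarrow> reduced (step w t)"
  by (auto simp: step_def reduced_butlast reduced_snoc)

lemma set_step: "set w \<subseteq> A \<Longrightarrow> t \<in> A \<Longrightarrow> set (step w t) \<subseteq> A"
  by (auto simp: step_def dest: in_set_butlastD)

lemma step_snoc_flip: "step (w @ [t]) (flip t) = w"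
  by (simp add: step_def)

lemma step_reduced_snoc: "reduced (w @ [t]) \<Longrightarrow> step w t = w @ [t]"
  by (auto simp: step_def reduced_snoc)

lemma step_step_flip: "reduced u \<Longrightarrow> step (step u t) (flip t) = u"
proof (cases "u \<noteq> [] \<and> last u = flip t")
  case True
  assume "reduced u"
  then have u: "u = butlast u @ [flip t]" using True by (metis append_butlast_last_id)
  then have "butlast u = [] \<or> last (butlast u) \<noteq> t"
    using \<open>reduced u\<close> by (metis flip_flip reduced_snoc)
  then have "step (butlast u) (flip t) = butlast u @ [flip t]"
    by (auto simp: step_def)
  then show ?thesis using True u by (simp add: step_def)
next
  case False
  then show ?thesis by (auto simp: step_def)
qed

lemma hd_step: "z \<noteq> [] \<Longrightarrow> step z s \<noteq> [] \<Longrightarrow> hd (step z s) = hd z"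
  by (cases z) (auto simp: step_def split: if_splits)

lemma fg_mult_Nil [simp]: "fg_mult u [] = u"
  by (simp add: fg_mult_def)

lemma fg_mult_snoc: "fg_mult u (v @ [t]) = step (fg_mult u v) t"
  by (simp add: fg_mult_def)

lemma fg_mult_single: "fg_mult u [t] = step u t"
  by (simp add: fg_mult_def)

lemma reduced_fg_mult: "reduced u \<Longrightarrow> reduced (fg_mult u v)"
  by (induct v rule: rev_induct) (auto simp: fg_mult_snoc reduced_step)

lemma set_fg_mult: "set u \<subseteq> A \<Longrightarrow> set v \<subseteq> A \<Longrightarrow> set (fg_mult u v) \<subseteq> A"
  by (induct v rule: rev_induct) (simp_all add: fg_mult_snoc set_step)

lemma fg_mult_Nil_left: "reduced w \<Longrightarrow> fg_mult [] w = w"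
  by (induct w rule: rev_induct) (auto simp: fg_mult_snoc step_reduced_snoc reduced_snoc)

lemma fg_mult_step: "reduced a \<Longrightarrow> fg_mult a (step w t) = step (fg_mult a w) t"
proof (cases "w \<noteq> [] \<and> last w = flip t")
  case True
  assume "reduced a"
  have w: "w = butlast w @ [flip t]" using True by (metis append_butlast_last_id)
  have "step (fg_mult a w) t = step (step (fg_mult a (butlast w)) (flip t)) t"
    by (subst w) (simp add: fg_mult_snoc)
  also have "\<dots> = fg_mult a (butlast w)"
    using step_step_flip[OF reduced_fg_mult[OF \<open>reduced a\<close>], of "butlast w" "flip t"] by simp
  finally show ?thesis using True by (simp add: step_def)
next
  case False
  then show ?thesis by (auto simp: step_def fg_mult_snoc)
qed

lemma fg_mult_assoc: "reduced a \<Longrightarrow> fg_mult (fg_mult a b) c = fg_mult a (fg_mult b c)"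
  by (induct c rule: rev_induct) (simp_all add: fg_mult_snoc fg_mult_step)

lemma fg_inv_snoc: "fg_inv (w @ [t]) = flip t # fg_inv w"
  by (simp add: fg_inv_def)

lemma fg_inv_fg_inv [simp]: "fg_inv (fg_inv w) = w"
  by (simp add: fg_inv_def rev_map comp_def)

lemma reduced_fg_inv: "reduced w \<Longrightarrow> reduced (fg_inv w)"
proof (induct w rule: rev_induct)
  case (snoc t w)
  have "w \<noteq> [] \<Longrightarrow> hd (fg_inv w) = flip (last w)"
    by (simp add: fg_inv_def hd_rev last_map)
  with snoc show ?case
    by (auto simp: fg_inv_snoc reduced_Cons reduced_snoc fg_inv_def flip_eq_iff)
qed (simp add: fg_inv_def)

lemma fg_mult_cancel: "reduced (u @ w) \<Longrightarrow> fg_mult (u @ w) (fg_inv w) = u"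
proof (induct w arbitrary: u rule: rev_induct)
  case (snoc t w)
  have "fg_mult (u @ w @ [t]) (fg_inv (w @ [t])) = fg_mult (u @ w) (fg_inv w)"
    using step_snoc_flip[of "u @ w" t] by (simp add: fg_inv_snoc fg_mult_def)
  then show ?case using snoc reduced_snoc[of "u @ w" t] by simp
qed (simp add: fg_inv_def)

lemma fg_mult_inv_right: "reduced w \<Longrightarrow> fg_mult w (fg_inv w) = []"
  using fg_mult_cancel[of "[]" w] by simp

lemma fg_mult_inv_left: "reduced w \<Longrightarrow> fg_mult (fg_inv w) w = []"
  using fg_mult_inv_right[OF reduced_fg_inv, of w] by simp

lemma fg_mult_inv_step: "reduced z \<Longrightarrow> fg_mult (fg_inv z) (step z t) = [t]"
  using fg_mult_assoc[OF reduced_fg_inv, of z z "[t]"]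
  by (simp add: fg_mult_single fg_mult_inv_left step_def)

lemma step_inj: "reduced z \<Longrightarrow> step z t = step z t' \<Longrightarrow> t = t'"
  by (metis list.inject fg_mult_inv_step)

lemma fg_verts_Nil [simp]: "[] \<in> fg_verts S"
  by (simp add: fg_verts_def)

lemma fg_verts_reduced: "x \<in> fg_verts S \<Longrightarrow> reduced x"
  by (simp add: fg_verts_def)

lemma fg_verts_single: "t \<in> letters S \<Longrightarrow> [t] \<in> fg_verts S"
  by (simp add: fg_verts_def reduced_def)

lemma fg_verts_step: "x \<in> fg_verts S \<Longrightarrow> t \<in> letters S \<Longrightarrow> step x t \<in> fg_verts S"
  by (simp add: fg_verts_def reduced_step set_step)

lemma fg_verts_fg_mult: "x \<in> fg_verts S \<Longrightarrow> y \<in> fg_verts S \<Longrightarrow> fg_mult x y \<in> fg_verts S"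
  by (simp add: fg_verts_def reduced_fg_mult set_fg_mult)

lemma fg_verts_fg_inv: "x \<in> fg_verts S \<Longrightarrow> fg_inv x \<in> fg_verts S"
  using reduced_fg_inv[of x] by (auto simp: fg_verts_def fg_inv_def flip_in_letters)

lemma fg_mult_inv_cancel_left: "a \<in> fg_verts S \<Longrightarrow> z \<in> fg_verts S \<Longrightarrow> fg_mult (fg_inv a) (fg_mult a z) = z"
  by (metis fg_mult_assoc fg_mult_Nil_left fg_mult_inv_left reduced_fg_inv fg_verts_reduced)

lemma fg_mult_cancel_inv_left: "a \<in> fg_verts S \<Longrightarrow> z \<in> fg_verts S \<Longrightarrow> fg_mult a (fg_mult (fg_inv a) z) = z"
  by (metis fg_mult_assoc fg_mult_Nil_left fg_mult_inv_right fg_verts_reduced)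

lemma bij_betw_fg_mult: "a \<in> fg_verts S \<Longrightarrow> bij_betw (fg_mult a) (fg_verts S) (fg_verts S)"
  by (rule bij_betwI[where g="fg_mult (fg_inv a)"])
    (auto simp: fg_verts_fg_mult fg_verts_fg_inv fg_mult_inv_cancel_left fg_mult_cancel_inv_left)

lemma fg_mult_inv_eq_single_iff:
  assumes "z \<in> fg_verts S" "y \<in> fg_verts S"
  shows "fg_mult (fg_inv z) y = [t] \<longleftrightarrow> t \<in> letters S \<and> y = step z t"
proof
  assume h: "fg_mult (fg_inv z) y = [t]"
  then have "y = step z t"
    using fg_mult_cancel_inv_left[OF assms] by (simp add: fg_mult_single)
  moreover have "t \<in> letters S"
    using fg_verts_fg_mult[OF fg_verts_fg_inv[OF assms(1)] assms(2)] h by (simp add: fg_verts_def)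
  ultimately show "t \<in> letters S \<and> y = step z t" by simp
next
  assume "t \<in> letters S \<and> y = step z t"
  then show "fg_mult (fg_inv z) y = [t]" using assms fg_verts_reduced fg_mult_inv_step by blast
qed


subsection \<open>Transition probabilities and the reversibility measure\<close>

lemma trans_p_step: "reduced z \<Longrightarrow> trans_p mu z (step z t) = mu t"
  by (simp add: trans_p_def fg_mult_inv_step)

lemma trans_p_non_neighbour:
  assumes "z \<in> fg_verts S" "y \<in> fg_verts S" "\<forall>t\<in>letters S. y \<noteq> step z t"
  shows "trans_p mu z y = 0"
  using assms fg_mult_inv_eq_single_iff[OF assms(1,2)]
  by (auto simp: trans_p_def split: list.splits)

lemma trans_p_neq_zero_imp_neighbour:
  assumes "z \<in> fg_verts S" "y \<in> fg_verts S" "trans_p mu z y \<noteq> 0"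
  obtains t where "t \<in> letters S" "y = step z t" "trans_p mu z y = mu t"
  using assms trans_p_non_neighbour[OF assms(1,2)] trans_p_step fg_verts_reduced by blast

lemma trans_p_nonneg:
  assumes "\<And>t. t \<in> letters S \<Longrightarrow> mu t > 0" "z \<in> fg_verts S" "y \<in> fg_verts S"
  shows "trans_p mu z y \<ge> 0"
  using assms by (cases "trans_p mu z y = 0")
    (auto elim!: trans_p_neq_zero_imp_neighbour[OF assms(2,3)] intro: less_imp_le)

lemma trans_p_has_sum:
  assumes z: "z \<in> fg_verts S" and mu: "(mu has_sum 1) (letters S)"
  shows "(trans_p mu z has_sum 1) (fg_verts S)"
proof -
  have rz: "reduced z" using z fg_verts_reduced by auto
  have "bij_betw (step z) (letters S) (step z ` letters S)"
    by (auto simp: bij_betw_def inj_on_def dest: step_inj[OF rz])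
  moreover have "((\<lambda>t. trans_p mu z (step z t)) has_sum 1) (letters S)"
    using mu by (simp add: trans_p_step[OF rz])
  ultimately have "(trans_p mu z has_sum 1) (step z ` letters S)"
    using has_sum_reindex_bij_betw by blast
  moreover have "step z ` letters S \<subseteq> fg_verts S" using fg_verts_step[OF z] by auto
  ultimately show ?thesis
    by (subst has_sum_cong_neutral[where T="step z ` letters S" and g="trans_p mu z"])
      (auto intro!: trans_p_non_neighbour z)
qed

lemma trans_p_fg_mult_left:
  assumes a: "a \<in> fg_verts S" and z: "z \<in> fg_verts S" and y: "y \<in> fg_verts S"
  shows "trans_p mu (fg_mult a z) (fg_mult a y) = trans_p mu z y"
proof (cases "\<exists>t\<in>letters S. y = step z t")
  case True
  then obtain t where "y = step z t" by blast
  with a z show ?thesis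
    by (simp add: fg_mult_step trans_p_step reduced_fg_mult fg_verts_reduced)
next
  case False
  have "\<forall>t\<in>letters S. fg_mult a y \<noteq> step (fg_mult a z) t"
  proof (intro ballI notI)
    fix t assume t: "t \<in> letters S" and "fg_mult a y = step (fg_mult a z) t"
    then have "fg_mult a y = fg_mult a (step z t)"
      using a by (simp add: fg_mult_step fg_verts_reduced)
    then have "y = step z t"
      by (metis a y z t fg_verts_step fg_mult_inv_cancel_left)
    then show False using False t by blast
  qed
  then show ?thesis
    using False a y z
    by (simp add: trans_p_non_neighbour trans_p_non_neighbour[OF fg_verts_fg_mult fg_verts_fg_mult])
qed

lemma rev_meas_Nil [simp]: "rev_meas mu [] = 1"
  by (simp add: rev_meas_def)

lemma rev_meas_snoc:
  assumes "reduced (w @ [t])"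
  shows "rev_meas mu (w @ [t]) = rev_meas mu w * (mu t / mu (flip t))"
proof -
  let ?F = "\<lambda>x i. trans_p mu (take (i - 1) x) (take i x) / trans_p mu (take i x) (take (i - 1) x)"
  have "trans_p mu w (w @ [t]) = mu t"
    using assms trans_p_step[of w mu t] by (simp add: step_reduced_snoc reduced_snoc)
  moreover have "trans_p mu (w @ [t]) w = mu (flip t)"
    using trans_p_step[OF assms, of mu "flip t"] by (simp add: step_snoc_flip)
  moreover have "(\<Prod>i\<in>{1..length w}. ?F (w @ [t]) i) = (\<Prod>i\<in>{1..length w}. ?F w i)"
    by (rule prod.cong) auto
  ultimately show ?thesis by (simp add: rev_meas_def prod.cl_ivl_Suc)
qed

lemma rev_meas_step:
  assumes mu: "\<And>t. t \<in> letters S \<Longrightarrow> mu t > 0" and w: "w \<in> fg_verts S" and t: "t \<in> letters S"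
  shows "rev_meas mu (step w t) = rev_meas mu w * (mu t / mu (flip t))"
proof (cases "w \<noteq> [] \<and> last w = flip t")
  case True
  then have "w = butlast w @ [flip t]" by (metis append_butlast_last_id)
  then have "rev_meas mu w = rev_meas mu (butlast w) * (mu (flip t) / mu t)"
    using rev_meas_snoc[of "butlast w" "flip t" mu] w fg_verts_reduced by fastforce
  moreover have "mu t > 0" "mu (flip t) > 0" using mu[OF t] mu[OF flip_in_letters[OF t]] by auto
  ultimately show ?thesis using True by (simp add: step_def)
next
  case False
  then have "step w t = w @ [t]" by (auto simp: step_def)
  moreover have "reduced (w @ [t])"
    using reduced_step[of w t] w fg_verts_reduced calculation by metis
  ultimately show ?thesis by (simp add: rev_meas_snoc)
qed

lemma rev_meas_pos:
  assumes mu: "\<And>t. t \<in> letters S \<Longrightarrow> mu t > 0"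
  shows "w \<in> fg_verts S \<Longrightarrow> rev_meas mu w > 0"
proof (induct w rule: rev_induct)
  case (snoc t w)
  then have "reduced (w @ [t])" "w \<in> fg_verts S" "t \<in> letters S"
    by (auto simp: fg_verts_def reduced_snoc)
  then show ?case using snoc mu[of t] mu[OF flip_in_letters[of t]] by (simp add: rev_meas_snoc)
qed simp

lemma rev_meas_fg_mult:
  assumes mu: "\<And>t. t \<in> letters S \<Longrightarrow> mu t > 0" and a: "a \<in> fg_verts S"
  shows "z \<in> fg_verts S \<Longrightarrow> rev_meas mu (fg_mult a z) = rev_meas mu a * rev_meas mu z"
proof (induct z rule: rev_induct)
  case (snoc t z)
  then have r: "reduced (z @ [t])" and z: "z \<in> fg_verts S" and t: "t \<in> letters S"
    by (auto simp: fg_verts_def reduced_snoc)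
  have "rev_meas mu (fg_mult a (z @ [t])) = rev_meas mu (fg_mult a z) * (mu t / mu (flip t))"
    using rev_meas_step[OF mu fg_verts_fg_mult[OF a z] t] by (simp add: fg_mult_snoc)
  then show ?case using snoc z by (simp add: rev_meas_snoc[OF r])
qed simp

lemma rev_meas_detailed_balance:
  assumes mu: "\<And>t. t \<in> letters S \<Longrightarrow> mu t > 0" and z: "z \<in> fg_verts S" and y: "y \<in> fg_verts S"
  shows "rev_meas mu z * trans_p mu z y = rev_meas mu y * trans_p mu y z"
proof (cases "\<exists>t\<in>letters S. y = step z t")
  case True
  then obtain t where t: "t \<in> letters S" and yt: "y = step z t" by blast
  have rz: "reduced z" "reduced y" using z y fg_verts_reduced by auto
  have "z = step y (flip t)" using yt step_step_flip[OF rz(1)] by simp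
  then have "trans_p mu y z = mu (flip t)" using trans_p_step[OF rz(2)] by metis
  moreover have "trans_p mu z y = mu t" using trans_p_step[OF rz(1)] yt by simp
  moreover have "mu (flip t) > 0" using mu[OF flip_in_letters[OF t]] .
  ultimately show ?thesis using rev_meas_step[OF mu z t] yt by simp
next
  case False
  have "\<forall>s\<in>letters S. z \<noteq> step y s"
    using False flip_in_letters step_step_flip y fg_verts_reduced by metis
  then show ?thesis
    using False y z by (simp add: trans_p_non_neighbour)
qed


subsection \<open>The transition operator on \<open>\<ell>\<^sup>2(T,m)\<close>\<close>

lemma weighted_product_summable_on:
  fixes f g :: "'b \<Rightarrow> 'c::{real_normed_div_algebra, banach}"
  assumes w: "\<And>a. a \<in> A \<Longrightarrow> w a \<ge> 0"
    and f: "(\<lambda>a. w a * (norm (f a))\<^sup>2) summable_on A"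
    and g: "(\<lambda>a. w a * (norm (g a))\<^sup>2) summable_on A"
  shows "(\<lambda>a. of_real (w a) * f a * g a) summable_on A"
proof -
  have "norm (of_real (w a) * f a * g a) \<le> w a * (norm (f a))\<^sup>2 + w a * (norm (g a))\<^sup>2"
    if "a \<in> A" for a
  proof -
    have "norm (f a) * norm (g a) \<le> (norm (f a))\<^sup>2 + (norm (g a))\<^sup>2"
      using sum_squares_bound[of "norm (f a)" "norm (g a)"]
        mult_nonneg_nonneg[OF norm_ge_zero norm_ge_zero, of "f a" "g a"] by linarith
    then have "w a * (norm (f a) * norm (g a)) \<le> w a * ((norm (f a))\<^sup>2 + (norm (g a))\<^sup>2)"
      using w[OF that] by (rule mult_left_mono)
    then show ?thesis using w[OF that] by (simp add: norm_mult distrib_left mult.assoc)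
  qed
  then have "(\<lambda>a. norm (of_real (w a) * f a * g a)) summable_on A"
    by (rule summable_on_comparison_test[OF summable_on_add[OF f g]]) auto
  then show ?thesis by (rule abs_summable_summable)
qed

lemma indicator_singleton_eq: "(\<lambda>z. if z = y then 1 else 0) = indicator {y}"
  by (auto simp: indicator_def)

definition branch :: "'a letter \<Rightarrow> 'a word set" where
  "branch t = {z. z \<noteq> [] \<and> hd z = t}"

locale free_walk =
  fixes S :: "'a set" and mu :: "'a letter \<Rightarrow> real"
  assumes mu_pos: "\<And>t. t \<in> letters S \<Longrightarrow> mu t > 0"
    and mu_has_sum: "(mu has_sum 1) (letters S)"
begin

abbreviation "V \<equiv> fg_verts S"
abbreviation "m \<equiv> rev_meas mu"
abbreviation "p \<equiv> trans_p mu"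

lemma m_pos: "z \<in> V \<Longrightarrow> m z > 0"
  by (rule rev_meas_pos[OF mu_pos])

lemma p_nonneg: "z \<in> V \<Longrightarrow> y \<in> V \<Longrightarrow> p z y \<ge> 0"
  by (rule trans_p_nonneg[OF mu_pos])

lemma l2m_outside: "f \<in> l2m S mu \<Longrightarrow> z \<notin> V \<Longrightarrow> f z = 0"
  by (simp add: l2m_def)

lemma l2m_summable: "f \<in> l2m S mu \<Longrightarrow> (\<lambda>x. m x * (cmod (f x))\<^sup>2) summable_on V"
  by (simp add: l2m_def)

lemma indicator_in_l2m: "y \<in> V \<Longrightarrow> indicator {y} \<in> l2m S mu"
  by (auto simp: l2m_def indicator_def
      intro!: finite_nonzero_values_imp_summable_on finite_subset[of _ "{y}"])

lemma l2m_scaleC: "f \<in> l2m S mu \<Longrightarrow> (\<lambda>z. c * f z) \<in> l2m S mu"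
  using summable_on_cmult_right[OF l2m_summable, of f "(cmod c)\<^sup>2"]
  by (simp add: l2m_def norm_mult power_mult_distrib mult.commute mult.left_commute)

lemma l2m_restrict:
  assumes "f \<in> l2m S mu"
  shows "(\<lambda>z. if z \<in> B then f z else 0) \<in> l2m S mu"
proof -
  have "(\<lambda>x. m x * (cmod (if x \<in> B then f x else 0))\<^sup>2) summable_on V"
    by (rule summable_on_comparison_test[OF l2m_summable[OF assms]]) (auto simp: m_pos less_imp_le)
  then show ?thesis using assms by (simp add: l2m_def)
qed

lemma shiftP_scaleC: "shiftP S mu lam (\<lambda>z. c * f z) = (\<lambda>z. c * shiftP S mu lam f z)"
proof -
  have "transP S mu (\<lambda>z. c * f z) x = c * transP S mu f x" for x
    by (simp add: transP_def mult.left_commute infsum_cmult_right')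
  then show ?thesis by (simp add: shiftP_def algebra_simps fun_eq_iff)
qed

lemma edge_weight_summable:
  assumes f: "f \<in> l2m S mu"
  shows "(\<lambda>(z, y). m z * p z y * (cmod (f z))\<^sup>2) summable_on V \<times> V"
proof (rule summable_on_SigmaI[where g="\<lambda>z. m z * (cmod (f z))\<^sup>2"])
  fix z assume z: "z \<in> V"
  show "((\<lambda>y. case (z, y) of (z, y) \<Rightarrow> m z * p z y * (cmod (f z))\<^sup>2) has_sum m z * (cmod (f z))\<^sup>2) V"
    using has_sum_cmult_right[OF trans_p_has_sum[OF z mu_has_sum], of "m z * (cmod (f z))\<^sup>2"]
    by (simp add: algebra_simps)
qed (auto intro!: mult_nonneg_nonneg l2m_summable f p_nonneg less_imp_le[OF m_pos])

lemma transP_self_adjoint: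
  assumes f: "f \<in> l2m S mu" and h: "h \<in> l2m S mu"
  shows "(\<Sum>\<^sub>\<infinity>z\<in>V. of_real (m z) * f z * transP S mu h z)
       = (\<Sum>\<^sub>\<infinity>y\<in>V. of_real (m y) * h y * transP S mu f y)"
proof -
  let ?K = "\<lambda>(z, y). of_real (m z * p z y) * f z * h y"
  have h_weight: "(\<lambda>(z, y). m z * p z y * (cmod (h y))\<^sup>2) summable_on V \<times> V"
  proof -
    have "(\<lambda>(z, y). m y * p y z * (cmod (h y))\<^sup>2) summable_on V \<times> V"
      using summable_on_swap[of "\<lambda>(y, z). m y * p y z * (cmod (h y))\<^sup>2" V V]
        edge_weight_summable[OF h] by simp
    then show ?thesis
      by (rule summable_on_cong[THEN iffD1, rotated])
        (auto simp: rev_meas_detailed_balance[OF mu_pos])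
  qed
  have "(\<lambda>a. of_real ((\<lambda>(z, y). m z * p z y) a) * f (fst a) * h (snd a)) summable_on V \<times> V"
    using edge_weight_summable[OF f] h_weight
    by (intro weighted_product_summable_on)
      (auto simp: case_prod_beta' intro!: mult_nonneg_nonneg p_nonneg less_imp_le[OF m_pos])
  then have K: "?K summable_on V \<times> V" by (simp add: case_prod_beta')
  have "(\<Sum>\<^sub>\<infinity>z\<in>V. of_real (m z) * f z * transP S mu h z) = (\<Sum>\<^sub>\<infinity>z\<in>V. \<Sum>\<^sub>\<infinity>y\<in>V. ?K (z, y))"
    by (intro infsum_cong)
      (simp add: transP_def flip: infsum_cmult_right', simp add: algebra_simps)
  also have "\<dots> = (\<Sum>\<^sub>\<infinity>y\<in>V. \<Sum>\<^sub>\<infinity>z\<in>V. ?K (z, y))"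
    using infsum_swap_banach[of "\<lambda>z y. ?K (z, y)"] K by simp
  also have "\<dots> = (\<Sum>\<^sub>\<infinity>y\<in>V. \<Sum>\<^sub>\<infinity>z\<in>V. of_real (m y * p y z) * h y * f z)"
  proof (intro infsum_cong)
    fix y z assume "y \<in> V" "z \<in> V"
    then have balance: "m z * p z y = m y * p y z" by (simp add: rev_meas_detailed_balance[OF mu_pos])
    show "?K (z, y) = of_real (m y * p y z) * h y * f z"
      by (simp only: case_prod_conv balance) (simp add: ac_simps)
  qed
  also have "\<dots> = (\<Sum>\<^sub>\<infinity>y\<in>V. of_real (m y) * h y * transP S mu f y)"
    by (intro infsum_cong)
      (simp add: transP_def flip: infsum_cmult_right', simp add: algebra_simps)
  finally show ?thesis .
qed

definition translate :: "'a word \<Rightarrow> ('a word \<Rightarrow> complex) \<Rightarrow> 'a word \<Rightarrow> complex" where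
  "translate a f = (\<lambda>z. if z \<in> V then f (fg_mult a z) else 0)"

lemma translate_in_l2m:
  assumes a: "a \<in> V" and f: "f \<in> l2m S mu"
  shows "translate a f \<in> l2m S mu"
proof -
  have "(\<lambda>z. m (fg_mult a z) * (cmod (f (fg_mult a z)))\<^sup>2) summable_on V"
    using summable_on_reindex_bij_betw[OF bij_betw_fg_mult[OF a], of "\<lambda>w. m w * (cmod (f w))\<^sup>2"]
      l2m_summable[OF f] by simp
  then have "(\<lambda>z. (1 / m a) * (m (fg_mult a z) * (cmod (f (fg_mult a z)))\<^sup>2)) summable_on V"
    by (rule summable_on_cmult_right)
  then have "(\<lambda>z. m z * (cmod (translate a f z))\<^sup>2) summable_on V"
    by (rule summable_on_cong[THEN iffD1, rotated])
      (use m_pos[OF a] in \<open>simp add: translate_def rev_meas_fg_mult[OF mu_pos a]\<close>)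
  then show ?thesis by (simp add: l2m_def translate_def)
qed

lemma transP_translate:
  assumes a: "a \<in> V" and z: "z \<in> V"
  shows "transP S mu (translate a f) z = transP S mu f (fg_mult a z)"
proof -
  have "transP S mu (translate a f) z = (\<Sum>\<^sub>\<infinity>y\<in>V. of_real (p (fg_mult a z) (fg_mult a y)) * f (fg_mult a y))"
    using z by (auto simp: transP_def translate_def trans_p_fg_mult_left[OF a z] intro: infsum_cong)
  also have "\<dots> = transP S mu f (fg_mult a z)"
    using infsum_reindex_bij_betw[OF bij_betw_fg_mult[OF a], of "\<lambda>w. of_real (p (fg_mult a z) w) * f w"]
      fg_verts_fg_mult[OF a z]
    by (simp add: transP_def)
  finally show ?thesis .
qed

lemma transP_restrict_branch:
  assumes z: "z \<in> V" "z \<noteq> []" and f: "f [] = 0"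
  shows "transP S mu (\<lambda>w. if w \<in> branch t then f w else 0) z
       = (if z \<in> branch t then transP S mu f z else 0)"
proof -
  have "of_real (p z w) * (if w \<in> branch t then f w else 0)
      = (if z \<in> branch t then of_real (p z w) * f w else 0)" if w: "w \<in> V" for w
  proof (cases "p z w = 0")
    case False
    then obtain s where "w = step z s" using trans_p_neq_zero_imp_neighbour[OF z(1) w] by metis
    then have "w = [] \<or> hd w = hd z" using hd_step[OF z(2)] by blast
    then show ?thesis using f z(2) by (auto simp: branch_def)
  qed simp
  then show ?thesis
    using z by (cases "z \<in> branch t") (auto simp: transP_def intro: infsum_cong infsum_0)
qed

lemma transP_restrict_branch_Nil:
  assumes t: "t \<in> letters S"
  shows "transP S mu (\<lambda>w. if w \<in> branch t then f w else 0) [] = of_real (mu t) * f [t]"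
proof -
  have "of_real (p [] w) * (if w \<in> branch t then f w else 0) = 0" if w: "w \<in> V - {[t]}" for w
  proof (cases "p [] w = 0")
    case False
    then obtain s where "w = step [] s"
      using trans_p_neq_zero_imp_neighbour[OF fg_verts_Nil DiffD1[OF w]] by metis
    then show ?thesis using w by (auto simp: step_def branch_def)
  qed simp
  then have "transP S mu (\<lambda>w. if w \<in> branch t then f w else 0) []
      = (\<Sum>\<^sub>\<infinity>w\<in>{[t]}. of_real (p [] w) * (if w \<in> branch t then f w else 0))"
    unfolding transP_def using fg_verts_single[OF t]
    by (simp only: if_True fg_verts_Nil) (rule infsum_cong_neutral; auto)
  also have "\<dots> = of_real (mu t) * f [t]"
    using trans_p_step[of "[]" mu t] by (simp add: step_def branch_def)
  finally show ?thesis .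
qed

end

subsection \<open>The Green function\<close>

locale free_walk_resolvent = free_walk +
  fixes lam :: complex and R :: "('a word \<Rightarrow> complex) \<Rightarrow> 'a word \<Rightarrow> complex"
  assumes R_bounded: "bounded_op_l2 S mu R"
    and R_inverse: "\<And>f. f \<in> l2m S mu \<Longrightarrow> shiftP S mu lam (R f) = f \<and> R (shiftP S mu lam f) = f"
begin

definition green :: "'a word \<Rightarrow> 'a word \<Rightarrow> complex" where
  "green x y = R (indicator {y}) x"

lemma R_in_l2m: "f \<in> l2m S mu \<Longrightarrow> R f \<in> l2m S mu"
  using R_bounded by (simp add: bounded_op_l2_def)

lemma shiftP_eq_imp_eq_R: "g \<in> l2m S mu \<Longrightarrow> f \<in> l2m S mu \<Longrightarrow> shiftP S mu lam g = f \<Longrightarrow> g = R f"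
  using R_inverse by metis

lemma green_in_l2m: "y \<in> V \<Longrightarrow> (\<lambda>x. green x y) \<in> l2m S mu"
  by (simp add: green_def R_in_l2m indicator_in_l2m)

lemma shiftP_green: "y \<in> V \<Longrightarrow> shiftP S mu lam (\<lambda>x. green x y) = indicator {y}"
  by (simp add: green_def R_inverse indicator_in_l2m)

lemma greenG_eq_green: "y \<in> V \<Longrightarrow> greenG S mu x y lam = green x y"
proof -
  assume y: "y \<in> V"
  let ?P = "\<lambda>g. g \<in> l2m S mu \<and> shiftP S mu lam g = indicator {y}"
  have "?P (SOME g. ?P g)"
    by (rule someI[of ?P]) (use green_in_l2m[OF y] shiftP_green[OF y] in blast)
  then have "(SOME g. ?P g) = (\<lambda>x. green x y)"
    using shiftP_eq_imp_eq_R indicator_in_l2m[OF y] by (simp add: green_def)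
  then show ?thesis by (simp add: greenG_def indicator_singleton_eq)
qed

lemma weighted_sum_transP_green:
  assumes f: "f \<in> l2m S mu" and y: "y \<in> V"
  shows "(\<Sum>\<^sub>\<infinity>z\<in>V. of_real (m z) * f z * transP S mu (\<lambda>x. green x y) z)
       = lam * (\<Sum>\<^sub>\<infinity>z\<in>V. of_real (m z) * f z * green z y) - of_real (m y) * f y"
proof -
  let ?A = "\<lambda>z. of_real (m z) * f z * green z y"
  let ?D = "\<lambda>z. of_real (m z) * f z * indicator {y} z"
  have transP_green: "transP S mu (\<lambda>x. green x y) z = lam * green z y - indicator {y} z" for z
    using fun_cong[OF shiftP_green[OF y], of z] by (simp add: shiftP_def algebra_simps)
  have "?A summable_on V"
    using weighted_product_summable_on[OF _ l2m_summable[OF f] l2m_summable[OF green_in_l2m[OF y]]]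
      m_pos less_imp_le by blast
  then have "((\<lambda>z. lam * ?A z) has_sum lam * infsum ?A V) V"
    by (rule has_sum_cmult_right[OF has_sum_infsum])
  moreover have "(?D has_sum of_real (m y) * f y) V"
    using y has_sum_finite[of "{y}" ?D] by (subst has_sum_cong_neutral[where T="{y}" and g="?D"]) auto
  ultimately have "((\<lambda>z. lam * ?A z + - ?D z) has_sum lam * infsum ?A V + - (of_real (m y) * f y)) V"
    by (intro has_sum_add has_sum_uminusI)
  moreover have "lam * ?A z + - ?D z = of_real (m z) * f z * transP S mu (\<lambda>x. green x y) z" for z
    unfolding transP_green by (simp add: algebra_simps)
  ultimately show ?thesis by (simp add: infsumI)
qed

lemma green_detailed_balance:
  assumes x: "x \<in> V" and y: "y \<in> V"
  shows "of_real (m x) * green x y = of_real (m y) * green y x"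
  using transP_self_adjoint[OF green_in_l2m[OF x] green_in_l2m[OF y]]
    weighted_sum_transP_green[OF green_in_l2m[OF x] y] weighted_sum_transP_green[OF green_in_l2m[OF y] x]
  by (simp add: mult.commute mult.left_commute)

lemma green_fg_mult_left:
  assumes a: "a \<in> V" and z: "z \<in> V" and y: "y \<in> V"
  shows "green (fg_mult a z) (fg_mult a y) = green z y"
proof -
  let ?g = "translate a (\<lambda>x. green x (fg_mult a y))"
  have ay: "fg_mult a y \<in> V" using fg_verts_fg_mult[OF a y] .
  have "shiftP S mu lam ?g w = indicator {y} w" for w
  proof (cases "w \<in> V")
    case True
    then have "fg_mult a w = fg_mult a y \<longleftrightarrow> w = y"
      by (metis a y fg_mult_inv_cancel_left)
    have "shiftP S mu lam ?g w = lam * green (fg_mult a w) (fg_mult a y)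
        - transP S mu (\<lambda>x. green x (fg_mult a y)) (fg_mult a w)"
      using True by (simp add: shiftP_def transP_translate[OF a True]) (simp add: translate_def)
    also have "\<dots> = indicator {y} w"
      using fun_cong[OF shiftP_green[OF ay], of "fg_mult a w"] \<open>fg_mult a w = fg_mult a y \<longleftrightarrow> w = y\<close>
      by (simp add: shiftP_def indicator_def)
    finally show ?thesis .
  next
    case False
    then show ?thesis using y by (auto simp: shiftP_def transP_def translate_def indicator_def)
  qed
  then have "?g = (\<lambda>x. green x y)"
    using shiftP_eq_imp_eq_R[OF translate_in_l2m[OF a green_in_l2m[OF ay]] indicator_in_l2m[OF y]]
    by (simp add: green_def fun_eq_iff)
  then show ?thesis using z by (metis translate_def)
qed

lemma green_root_neighbour:
  assumes "green [] [] = 0"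
  shows "\<exists>t\<in>letters S. green [t] [] \<noteq> 0"
proof -
  have "transP S mu (\<lambda>x. green x []) [] = -1"
    using assms fun_cong[OF shiftP_green[OF fg_verts_Nil], of "[]"]
    by (simp add: shiftP_def minus_equation_iff)
  then have "(\<Sum>\<^sub>\<infinity>y\<in>V. of_real (p [] y) * green y []) \<noteq> 0"
    by (simp add: transP_def)
  then obtain y where y: "y \<in> V" and "of_real (p [] y) * green y [] \<noteq> 0"
    using infsum_0 by meson
  then have "p [] y \<noteq> 0" "green y [] \<noteq> 0" by auto
  then obtain t where "t \<in> letters S" "y = [t]"
    using trans_p_neq_zero_imp_neighbour[OF fg_verts_Nil y] by (metis step_def append_Nil)
  then show ?thesis using \<open>green y [] \<noteq> 0\<close> by blast
qed

lemma green_restrict_branch: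
  assumes g0: "green [] [] = 0" and t: "t \<in> letters S"
  shows "(\<lambda>z. if z \<in> branch t then green z [] else 0)
       = (\<lambda>z. (- of_real (mu t) * green [t] []) * green z [])"
proof -
  let ?g = "\<lambda>z. green z []"
  let ?c = "- of_real (mu t) * green [t] []"
  have "shiftP S mu lam (\<lambda>z. if z \<in> branch t then ?g z else 0) z = ?c * indicator {[]} z" for z
  proof (cases "z \<in> V")
    case False
    then show ?thesis
      using l2m_outside[OF green_in_l2m[OF fg_verts_Nil] False]
      by (auto simp: shiftP_def transP_def indicator_def)
  next
    case z: True
    show ?thesis
    proof (cases "z = []")
      case True
      then show ?thesis
        using transP_restrict_branch_Nil[OF t, of ?g] by (simp add: shiftP_def branch_def)
    next
      case False
      then show ?thesis
        using fun_cong[OF shiftP_green[OF fg_verts_Nil], of z] g0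
        by (auto simp: shiftP_def transP_restrict_branch[OF z False])
    qed
  qed
  then have "(\<lambda>z. if z \<in> branch t then ?g z else 0) = R (\<lambda>z. ?c * indicator {[]} z)"
    by (intro shiftP_eq_imp_eq_R l2m_restrict l2m_scaleC green_in_l2m indicator_in_l2m fg_verts_Nil) auto
  moreover have "(\<lambda>z. ?c * ?g z) = R (\<lambda>z. ?c * indicator {[]} z)"
    by (intro shiftP_eq_imp_eq_R l2m_scaleC green_in_l2m indicator_in_l2m fg_verts_Nil)
      (simp only: shiftP_scaleC shiftP_green[OF fg_verts_Nil])
  ultimately show ?thesis by simp
qed

lemma green_diagonal_nonzero:
  assumes x: "x \<in> V"
  shows "green x x \<noteq> 0"
proof
  assume "green x x = 0"
  then have g0: "green [] [] = 0"
    using green_fg_mult_left[OF fg_verts_fg_inv[OF x] x x] fg_mult_inv_left[OF fg_verts_reduced[OF x]]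
    by simp
  then obtain t where t: "t \<in> letters S" and gt: "green [t] [] \<noteq> 0"
    using green_root_neighbour by blast
  have "[flip t] \<notin> branch t" by (simp add: branch_def)
  then have "green [flip t] [] = 0"
    using fun_cong[OF green_restrict_branch[OF g0 t], of "[flip t]"] gt mu_pos[OF t] by simp
  moreover have "green [] [t] = green [flip t] []"
    using green_fg_mult_left[OF fg_verts_single[OF t] fg_verts_single[OF flip_in_letters[OF t]] fg_verts_Nil]
    by (simp add: fg_mult_single step_def)
  ultimately have "of_real (m [t]) * green [t] [] = 0"
    using green_detailed_balance[OF fg_verts_single[OF t] fg_verts_Nil] by simp
  then show False using gt m_pos[OF fg_verts_single[OF t]] by simp
qed

end

theorem corollary4p1:
  fixes S :: "'a set" and mu :: "'a letter \<Rightarrow> real"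
  assumes "countable S"
    and "\<And>t. t \<in> letters S \<Longrightarrow> mu t > 0"
    and "(mu has_sum 1) (letters S)"
  shows "(\<forall>lam\<in>resP S mu. \<forall>x\<in>fg_verts S. greenG S mu x x lam \<noteq> 0)
         \<and> resP_star S mu = resP S mu"
proof -
  have "greenG S mu x x lam \<noteq> 0" if "lam \<in> resP S mu" "x \<in> fg_verts S" for lam x
  proof -
    obtain R where "bounded_op_l2 S mu R"
      "\<forall>f\<in>l2m S mu. shiftP S mu lam (R f) = f \<and> R (shiftP S mu lam f) = f"
      using \<open>lam \<in> resP S mu\<close> by (auto simp: resP_def)
    then interpret free_walk_resolvent S mu lam R
      using assms(2,3) by unfold_locales auto
    show ?thesis using that(2) by (simp add: greenG_eq_green green_diagonal_nonzero)
  qed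
  then show ?thesis by (auto simp: resP_star_def)
qed

end
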